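(* Let $K$ be a totally real number field of degree $n$, $\Gamma=\mathbf{SL}_2(\mathcal O_K)$, $1\le m\le n$ and $\mathcal I=\{1,\dots,m\}$. Let $F_1,\dots,F_{m+1}$ be Hilbert modular forms for $\Gamma$ of $\mathcal I$-parallel weights $r_1,\dots,r_{m+1}$ respectively. Then $$\langle F_1,\dots,F_{m+1}\rangle_{\underline 1}:=\det\begin{pmatrix} r_1F_1&\cdots&r_{m+1}F_{m+1}\\ \partial F_1/\partial z_1&\cdots&\partial F_{m+1}/\partial z_1\\ \vdots&&\vdots\\ \partial F_1/\partial z_m&\cdots&\partial F_{m+1}/\partial z_m\end{pmatrix}$$ is a Hilbert modular form for $\Gamma$ of $\mathcal I$-parallel weight $r_1+\dots+r_{m+1}+2$.
   Context: $\mathcal O_K$ is principal. With real embeddings $\sigma_i$, a Hilbert modular form of weight $\underline f=(f_1,\dots,f_n)$ is a holomorphic $F:\mathcal H^n\to\mathbb C$ with $F(\gamma\underline z)=\prod_i(\sigma_i(c)z_i+\sigma_i(d))^{f_i}F(\underline z)$ for all $\gamma\in\Gamma$, where $\gamma\underline z=(\frac{\sigma_i(a)z_i+\sigma_i(b)}{\sigma_i(c)z_i+\sigma_i(d)})_i$. It has $\mathcal I$-parallel weight $f$ if $f_i=f$ for all $i\in\mathcal I$. *)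

theory Defs
  imports "HOL-Analysis.Derivative" "HOL-Computational_Algebra.Polynomial" "Jordan_Normal_Form.Determinant"
begin

definition is_subfield :: "complex set \<Rightarrow> bool" where
  "is_subfield K \<longleftrightarrow> 0 \<in> K \<and> 1 \<in> K \<and>
     (\<forall>x\<in>K. \<forall>y\<in>K. x + y \<in> K \<and> x * y \<in> K) \<and>
     (\<forall>x\<in>K. - x \<in> K \<and> inverse x \<in> K)"

definition is_Q_basis :: "complex set \<Rightarrow> nat \<Rightarrow> (nat \<Rightarrow> complex) \<Rightarrow> bool" where
  "is_Q_basis K n b \<longleftrightarrow> (\<forall>i\<in>{1..n}. b i \<in> K) \<and>
     (\<forall>x\<in>K. \<exists>q::nat \<Rightarrow> rat. x = (\<Sum>i=1..n. of_rat (q i) * b i)) \<and>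
     (\<forall>q::nat \<Rightarrow> rat. (\<Sum>i=1..n. of_rat (q i) * b i) = 0 \<longrightarrow> (\<forall>i\<in>{1..n}. q i = 0))"

definition number_field_of_degree :: "complex set \<Rightarrow> nat \<Rightarrow> bool" where
  "number_field_of_degree K n \<longleftrightarrow> is_subfield K \<and> (\<exists>b. is_Q_basis K n b)"

text \<open>A field embedding of K into C (only its values on K matter).\<close>
definition is_embedding :: "complex set \<Rightarrow> (complex \<Rightarrow> complex) \<Rightarrow> bool" where
  "is_embedding K \<sigma> \<longleftrightarrow> \<sigma> 1 = 1 \<and>
     (\<forall>x\<in>K. \<forall>y\<in>K. \<sigma> (x + y) = \<sigma> x + \<sigma> y \<and> \<sigma> (x * y) = \<sigma> x * \<sigma> y)"

definition totally_real :: "complex set \<Rightarrow> bool" where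
  "totally_real K \<longleftrightarrow> (\<forall>\<sigma>. is_embedding K \<sigma> \<longrightarrow> (\<forall>x\<in>K. \<sigma> x \<in> \<real>))"

definition enumerates_embeddings :: "complex set \<Rightarrow> nat \<Rightarrow> (nat \<Rightarrow> complex \<Rightarrow> complex) \<Rightarrow> bool" where
  "enumerates_embeddings K n \<sigma> \<longleftrightarrow> (\<forall>i\<in>{1..n}. is_embedding K (\<sigma> i)) \<and>
     (\<forall>\<tau>. is_embedding K \<tau> \<longrightarrow> (\<exists>!i. i \<in> {1..n} \<and> (\<forall>x\<in>K. \<sigma> i x = \<tau> x)))"

definition algebraic_integer :: "complex \<Rightarrow> bool" where
  "algebraic_integer x \<longleftrightarrow> (\<exists>p :: int poly. lead_coeff p = 1 \<and> poly (map_poly of_int p) x = 0)"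

definition ring_of_integers :: "complex set \<Rightarrow> complex set" where
  "ring_of_integers K = {x \<in> K. algebraic_integer x}"

definition is_ideal_of :: "complex set \<Rightarrow> complex set \<Rightarrow> bool" where
  "is_ideal_of R I \<longleftrightarrow> I \<subseteq> R \<and> 0 \<in> I \<and> (\<forall>x\<in>I. \<forall>y\<in>I. x + y \<in> I) \<and>
     (\<forall>x\<in>I. - x \<in> I) \<and> (\<forall>r\<in>R. \<forall>x\<in>I. r * x \<in> I)"

definition principal_ring :: "complex set \<Rightarrow> bool" where
  "principal_ring R \<longleftrightarrow> (\<forall>I. is_ideal_of R I \<longrightarrow> (\<exists>a\<in>R. I = {a * x | x. x \<in> R}))"

definition upper_half_space :: "nat \<Rightarrow> (nat \<Rightarrow> complex) set" where
  "upper_half_space n = {z. (\<forall>i\<in>{1..n}. Im (z i) > 0) \<and> (\<forall>i. i \<notin> {1..n} \<longrightarrow> z i = 0)}"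

definition holomorphic_on_Hn :: "nat \<Rightarrow> ((nat \<Rightarrow> complex) \<Rightarrow> complex) \<Rightarrow> bool" where
  "holomorphic_on_Hn n F \<longleftrightarrow>
     (\<forall>z\<in>upper_half_space n. \<forall>\<epsilon>>0. \<exists>\<delta>>0. \<forall>w\<in>upper_half_space n.
        (\<forall>i\<in>{1..n}. cmod (w i - z i) < \<delta>) \<longrightarrow> cmod (F w - F z) < \<epsilon>) \<and>
     (\<forall>z\<in>upper_half_space n. \<forall>i\<in>{1..n}.
        (\<lambda>w. F (z(i := w))) field_differentiable (at (z i)))"

definition partial_z :: "nat \<Rightarrow> ((nat \<Rightarrow> complex) \<Rightarrow> complex) \<Rightarrow> (nat \<Rightarrow> complex) \<Rightarrow> complex" where
  "partial_z i F z = deriv (\<lambda>w. F (z(i := w))) (z i)"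

definition moebius_action ::
  "nat \<Rightarrow> (nat \<Rightarrow> complex \<Rightarrow> complex) \<Rightarrow> complex \<Rightarrow> complex \<Rightarrow> complex \<Rightarrow> complex
     \<Rightarrow> (nat \<Rightarrow> complex) \<Rightarrow> (nat \<Rightarrow> complex)" where
  "moebius_action n \<sigma> a b c d z =
     (\<lambda>i. if i \<in> {1..n} then (\<sigma> i a * z i + \<sigma> i b) / (\<sigma> i c * z i + \<sigma> i d) else 0)"

definition in_SL2 :: "complex set \<Rightarrow> complex \<Rightarrow> complex \<Rightarrow> complex \<Rightarrow> complex \<Rightarrow> bool" where
  "in_SL2 R a b c d \<longleftrightarrow> a \<in> R \<and> b \<in> R \<and> c \<in> R \<and> d \<in> R \<and> a * d - b * c = 1"

definition hilbert_modular_form ::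
  "complex set \<Rightarrow> nat \<Rightarrow> (nat \<Rightarrow> complex \<Rightarrow> complex) \<Rightarrow> (nat \<Rightarrow> int)
     \<Rightarrow> ((nat \<Rightarrow> complex) \<Rightarrow> complex) \<Rightarrow> bool" where
  "hilbert_modular_form K n \<sigma> f F \<longleftrightarrow> holomorphic_on_Hn n F \<and>
     (\<forall>a b c d. in_SL2 (ring_of_integers K) a b c d \<longrightarrow>
       (\<forall>z\<in>upper_half_space n.
          F (moebius_action n \<sigma> a b c d z) =
            (\<Prod>i=1..n. (\<sigma> i c * z i + \<sigma> i d) powi f i) * F z))"

definition parallel_weight_on :: "nat set \<Rightarrow> (nat \<Rightarrow> int) \<Rightarrow> int \<Rightarrow> bool" where
  "parallel_weight_on I f k \<longleftrightarrow> (\<forall>i\<in>I. f i = k)"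

text \<open>The bracket <F_1,...,F_{m+1}>_1: determinant of the (m+1)x(m+1) matrix whose first row is
  r_j F_j and whose (k+1)-th row is dF_j/dz_k (rows/columns 0-indexed here, column j for F_{j+1}).\<close>
definition bracket ::
  "nat \<Rightarrow> (nat \<Rightarrow> int) \<Rightarrow> (nat \<Rightarrow> (nat \<Rightarrow> complex) \<Rightarrow> complex) \<Rightarrow> (nat \<Rightarrow> complex) \<Rightarrow> complex" where
  "bracket m r F z = det (mat (m + 1) (m + 1) (\<lambda>(k, j).
      if k = 0 then of_int (r (j + 1)) * F (j + 1) z else partial_z k (F (j + 1)) z))"

end

theory Submission
  imports Defs "HOL-Complex_Analysis.Complex_Analysis"
begin

(* Let gamma = (a b; c d) in SL_2(O_K) and e_k = sigma_k(c) z_k + sigma_k(d).  Since K is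
   totally real, each sigma_k(gamma) lies in SL_2(R), so gamma acts on H^n and e_k <> 0.
   If F_j transforms with the automorphy factor J_j and has weight r_j in z_k, differentiating
   F_j(gamma z) = J_j(z) F_j(z) in z_k gives
     dF_j/dz_k (gamma z) = J_j(z) (r_j sigma_k(c) e_k F_j(z) + e_k^2 dF_j/dz_k (z)).
   Hence the bracket matrix at gamma z is L M(z) diag(J_j(z)) with L lower triangular with
   diagonal (1, e_1^2, ..., e_m^2): the extra terms are multiples of the first row (r_j F_j)_j.
   Taking determinants, the bracket transforms with the product of the J_j times
   e_1^2 ... e_m^2.
   Holomorphy of the bracket reduces to holomorphy of partial derivatives on H^n, which follows
   from Cauchy's formula for the derivative on small circles: it gives continuity by a uniform
   estimate, and holomorphy in the other variables after exchanging two circle integrals. *)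

section \<open>Holomorphic functions on the product of upper half planes\<close>

abbreviation upper_half_plane :: "complex set" where
  "upper_half_plane \<equiv> {w. 0 < Im w}"

lemma open_upper_half_plane: "open upper_half_plane"
  by (simp add: open_halfspace_Im_gt)

lemma upper_half_space_upd:
  "z \<in> upper_half_space n \<Longrightarrow> i \<in> {1..n} \<Longrightarrow> 0 < Im w \<Longrightarrow> z(i := w) \<in> upper_half_space n"
  by (auto simp: upper_half_space_def)

lemma Im_upper_half_space_pos: "z \<in> upper_half_space n \<Longrightarrow> i \<in> {1..n} \<Longrightarrow> 0 < Im (z i)"
  by (auto simp: upper_half_space_def)

lemma cball_subset_shifted_half_plane:
  assumes "r < Im x" shows "cball 0 r \<subseteq> {t. - Im x < Im t}"
proof
  fix t :: complex assume "t \<in> cball 0 r"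
  then show "t \<in> {t. - Im x < Im t}" using abs_Im_le_cmod[of t] assms by auto
qed

lemma Im_gt_if_cmod_diff_lt: "cmod (w - z) < Im z - r \<Longrightarrow> r < Im w"
  using abs_Im_le_cmod[of "w - z"] by (simp add: abs_le_iff)

definition continuous_on_Hn :: "nat \<Rightarrow> ((nat \<Rightarrow> complex) \<Rightarrow> complex) \<Rightarrow> bool" where
  "continuous_on_Hn n G \<longleftrightarrow> (\<forall>z\<in>upper_half_space n. \<forall>\<epsilon>>0. \<exists>\<delta>>0. \<forall>w\<in>upper_half_space n.
     (\<forall>i\<in>{1..n}. cmod (w i - z i) < \<delta>) \<longrightarrow> cmod (G w - G z) < \<epsilon>)"

definition separately_holomorphic_on_Hn :: "nat \<Rightarrow> ((nat \<Rightarrow> complex) \<Rightarrow> complex) \<Rightarrow> bool" where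
  "separately_holomorphic_on_Hn n G \<longleftrightarrow>
     (\<forall>z\<in>upper_half_space n. \<forall>i\<in>{1..n}. (\<lambda>w. G (z(i := w))) holomorphic_on upper_half_plane)"

lemma separately_holomorphic_on_Hn_iff_differentiable:
  "separately_holomorphic_on_Hn n G \<longleftrightarrow>
     (\<forall>z\<in>upper_half_space n. \<forall>i\<in>{1..n}. (\<lambda>w. G (z(i := w))) field_differentiable at (z i))"
proof
  assume "separately_holomorphic_on_Hn n G"
  then show "\<forall>z\<in>upper_half_space n. \<forall>i\<in>{1..n}. (\<lambda>w. G (z(i := w))) field_differentiable at (z i)"
    using holomorphic_on_imp_differentiable_at[OF _ open_upper_half_plane] Im_upper_half_space_pos
    unfolding separately_holomorphic_on_Hn_def by blast
next
  assume H: "\<forall>z\<in>upper_half_space n. \<forall>i\<in>{1..n}. (\<lambda>w. G (z(i := w))) field_differentiable at (z i)"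
  have "(\<lambda>u. G (z(i := u))) field_differentiable at w within upper_half_plane"
    if "z \<in> upper_half_space n" "i \<in> {1..n}" "w \<in> upper_half_plane" for z i w
    using H upper_half_space_upd[OF that(1,2), of w] that(2,3)
    by (fastforce intro: field_differentiable_at_within)
  then show "separately_holomorphic_on_Hn n G"
    unfolding separately_holomorphic_on_Hn_def holomorphic_on_def by blast
qed

lemma holomorphic_on_Hn_iff:
  "holomorphic_on_Hn n G \<longleftrightarrow> continuous_on_Hn n G \<and> separately_holomorphic_on_Hn n G"
  unfolding holomorphic_on_Hn_def continuous_on_Hn_def
    separately_holomorphic_on_Hn_iff_differentiable ..

definition Hn_nhds :: "nat \<Rightarrow> (nat \<Rightarrow> complex) \<Rightarrow> (nat \<Rightarrow> complex) filter" where
  "Hn_nhds n z = (INF d\<in>{0<..}. principal {w\<in>upper_half_space n. \<forall>i\<in>{1..n}. cmod (w i - z i) < d})"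

lemma eventually_Hn_nhds:
  "eventually P (Hn_nhds n z) \<longleftrightarrow>
     (\<exists>d>0. \<forall>w\<in>upper_half_space n. (\<forall>i\<in>{1..n}. cmod (w i - z i) < d) \<longrightarrow> P w)"
proof -
  define B where "B d = {w \<in> upper_half_space n. \<forall>i\<in>{1..n}. cmod (w i - z i) < d}" for d :: real
  have "B (min a b) \<subseteq> B a \<inter> B b" for a b by (auto simp: B_def)
  then have "eventually P (INF d\<in>{0<..}. principal (B d)) \<longleftrightarrow>
      (\<exists>d\<in>{0<..}. eventually P (principal (B d)))"
    by (intro eventually_INF_base) (auto intro!: bexI[where x = "min _ _"])
  then show ?thesis unfolding Hn_nhds_def B_def eventually_principal by fastforce
qed

lemma continuous_on_Hn_iff_tendsto:
  "continuous_on_Hn n G \<longleftrightarrow> (\<forall>z\<in>upper_half_space n. (G \<longlongrightarrow> G z) (Hn_nhds n z))"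
  unfolding continuous_on_Hn_def tendsto_iff eventually_Hn_nhds dist_norm by auto

lemma continuous_on_compose_Hn:
  assumes "continuous_on_Hn n G" and "\<And>p. p \<in> S \<Longrightarrow> \<Phi> p \<in> upper_half_space n"
    and "\<And>i. i \<in> {1..n} \<Longrightarrow> continuous_on S (\<lambda>p. \<Phi> p i)"
  shows "continuous_on S (\<lambda>p. G (\<Phi> p))"
  unfolding continuous_on_def tendsto_iff
proof (intro ballI allI impI)
  fix p and e :: real assume p: "p \<in> S" and e: "0 < e"
  obtain d where "d > 0" and d: "\<And>w. w \<in> upper_half_space n \<Longrightarrow>
      (\<forall>i\<in>{1..n}. cmod (w i - \<Phi> p i) < d) \<Longrightarrow> cmod (G w - G (\<Phi> p)) < e"
    using assms(1) assms(2)[OF p] e unfolding continuous_on_Hn_def by meson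
  have "\<forall>i\<in>{1..n}. eventually (\<lambda>x. dist (\<Phi> x i) (\<Phi> p i) < d) (at p within S)"
    using assms(3) p \<open>d > 0\<close> unfolding continuous_on_def tendsto_iff by blast
  then have "eventually (\<lambda>x. \<forall>i\<in>{1..n}. dist (\<Phi> x i) (\<Phi> p i) < d) (at p within S)"
    by (intro eventually_ball_finite) auto
  moreover have "eventually (\<lambda>x. x \<in> S) (at p within S)"
    by (simp add: eventually_at_filter)
  ultimately show "eventually (\<lambda>x. dist (G (\<Phi> x)) (G (\<Phi> p)) < e) (at p within S)"
    by eventually_elim (use d assms(2) in \<open>auto simp: dist_norm\<close>)
qed

lemma continuous_on_Hn_cmult:
  "continuous_on_Hn n G \<Longrightarrow> continuous_on_Hn n (\<lambda>z. c * G z)"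
  unfolding continuous_on_Hn_iff_tendsto by (auto intro!: tendsto_intros)

lemma holomorphic_on_Hn_cmult:
  assumes "holomorphic_on_Hn n G"
  shows "holomorphic_on_Hn n (\<lambda>z. c * G z)"
  using assms continuous_on_Hn_cmult
  unfolding holomorphic_on_Hn_iff separately_holomorphic_on_Hn_def
  by (auto intro!: holomorphic_intros)

section \<open>Partial derivatives\<close>

lemma has_field_derivative_partial_z:
  assumes "holomorphic_on_Hn n F" "z \<in> upper_half_space n" "k \<in> {1..n}"
  shows "((\<lambda>w. F (z(k := w))) has_field_derivative partial_z k F z) (at (z k))"
  using assms unfolding holomorphic_on_Hn_def partial_z_def
  by (simp add: DERIV_deriv_iff_field_differentiable)

lemma holomorphic_on_shifted_slice:
  assumes "holomorphic_on_Hn n F" "z \<in> upper_half_space n" "k \<in> {1..n}"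
  shows "(\<lambda>t. F (z(k := z k + t))) holomorphic_on {t. - Im (z k) < Im t}"
proof -
  have "(\<lambda>w. F (z(k := w))) holomorphic_on upper_half_plane"
    using assms by (auto simp: holomorphic_on_Hn_iff separately_holomorphic_on_Hn_def)
  then have "((\<lambda>w. F (z(k := w))) \<circ> (\<lambda>t. z k + t)) holomorphic_on {t. - Im (z k) < Im t}"
    by (intro holomorphic_on_compose_gen[where t = upper_half_plane] holomorphic_intros) auto
  then show ?thesis by (simp add: o_def)
qed

lemma partial_z_has_contour_integral:
  assumes F: "holomorphic_on_Hn n F" and z: "z \<in> upper_half_space n" and k: "k \<in> {1..n}"
    and r: "0 < r" "r < Im (z k)"
  shows "((\<lambda>t. F (z(k := z k + t)) / t^2) has_contour_integral
           (2 * of_real pi * \<i> * partial_z k F z)) (circlepath 0 r)"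
proof -
  define g where "g = (\<lambda>t. F (z(k := z k + t)))"
  have "g holomorphic_on cball 0 r"
    using holomorphic_on_shifted_slice[OF F z k] cball_subset_shifted_half_plane[OF r(2)]
    unfolding g_def by (rule holomorphic_on_subset)
  then have cont: "continuous_on (cball 0 r) g" and hol: "g holomorphic_on ball 0 r"
    using holomorphic_on_imp_continuous_on holomorphic_on_subset ball_subset_cball by blast+
  note Cauchy = Cauchy_derivative_integral_circlepath[OF cont hol, of 0]
  have "((\<lambda>t. F (z(k := t))) has_field_derivative partial_z k F z) (at (0 + z k))"
    using has_field_derivative_partial_z[OF F z k] by simp
  then have "(g has_field_derivative partial_z k F z) (at 0)"
    unfolding DERIV_shift g_def by (simp add: add.commute)
  then have "contour_integral (circlepath 0 r) (\<lambda>t. g t / t^2) = 2 * of_real pi * \<i> * partial_z k F z"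
    using DERIV_unique Cauchy(2) r by fastforce
  then show ?thesis
    using has_contour_integral_integral[OF Cauchy(1)] r unfolding g_def by simp
qed

lemma compact_uniform_cover_radius:
  fixes S :: "'a :: metric_space set"
  assumes "compact S" and "\<And>t. t \<in> S \<Longrightarrow> 0 < D t"
  obtains \<delta> where "0 < \<delta>" and "\<And>t. t \<in> S \<Longrightarrow> \<exists>t'\<in>S. dist t' t < D t' \<and> \<delta> \<le> D t'"
proof -
  have cover_all: "S \<subseteq> (\<Union>t\<in>S. ball t (D t))"
    using assms(2) by force
  obtain C where C: "C \<subseteq> S" "finite C" and cover: "S \<subseteq> (\<Union>t\<in>C. ball t (D t))"
    by (rule compactE_image[OF assms(1) _ cover_all]) auto
  define \<delta> where "\<delta> = Min (insert 1 (D ` C))"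
  have "0 < \<delta>" unfolding \<delta>_def using C assms(2) by (auto simp: Min_gr_iff)
  moreover have "\<delta> \<le> D t" if "t \<in> C" for t
    unfolding \<delta>_def using C that by (intro Min_le) auto
  ultimately show ?thesis
    using that C cover by (metis (no_types, lifting) UN_E mem_ball subsetD)
qed

lemma continuous_on_Hn_uniformly_on_circle:
  assumes F: "continuous_on_Hn n F" and z: "z \<in> upper_half_space n" and k: "k \<in> {1..n}"
    and r: "0 < r" "r < Im (z k)" and \<eta>: "0 < \<eta>"
  obtains \<delta> where "\<delta> > 0"
    and "\<And>w t. w \<in> upper_half_space n \<Longrightarrow> \<forall>i\<in>{1..n}. cmod (w i - z i) < \<delta> \<Longrightarrow> cmod t = r \<Longrightarrow>
           w(k := w k + t) \<in> upper_half_space n \<and>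
           cmod (F (w(k := w k + t)) - F (z(k := z k + t))) < \<eta>"
proof -
  define zt where "zt t = z(k := z k + t)" for t
  have zt: "zt t \<in> upper_half_space n" if "t \<in> sphere 0 r" for t
    using upper_half_space_upd[OF z k] cball_subset_shifted_half_plane[OF r(2)] that
    by (auto simp: zt_def)
  have "\<exists>d>0. \<forall>w\<in>upper_half_space n.
          (\<forall>i\<in>{1..n}. cmod (w i - zt t i) < d) \<longrightarrow> cmod (F w - F (zt t)) < \<eta> / 2"
    if "t \<in> sphere 0 r" for t
    using F zt[OF that] \<eta> unfolding continuous_on_Hn_def by (meson half_gt_zero)
  then obtain D where D: "\<And>t. t \<in> sphere 0 r \<Longrightarrow> D t > 0"
    and DF: "\<And>t w. t \<in> sphere 0 r \<Longrightarrow> w \<in> upper_half_space n \<Longrightarrow>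
               \<forall>i\<in>{1..n}. cmod (w i - zt t i) < D t \<Longrightarrow> cmod (F w - F (zt t)) < \<eta> / 2"
    by metis
  obtain \<delta>\<^sub>0 where "0 < \<delta>\<^sub>0" and \<delta>\<^sub>0: "\<And>t. t \<in> sphere 0 r \<Longrightarrow>
      \<exists>t'\<in>sphere 0 r. dist t' t < D t' / 2 \<and> \<delta>\<^sub>0 \<le> D t' / 2"
    by (rule compact_uniform_cover_radius[OF compact_sphere[of 0 r], where D = "\<lambda>t. D t / 2"])
       (use D in auto)
  define \<delta> where "\<delta> = min \<delta>\<^sub>0 (Im (z k) - r)"
  have "w(k := w k + t) \<in> upper_half_space n \<and> cmod (F (w(k := w k + t)) - F (zt t)) < \<eta>"
    if w: "w \<in> upper_half_space n" and wz: "\<forall>i\<in>{1..n}. cmod (w i - z i) < \<delta>" and t: "cmod t = r"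
    for w t
  proof -
    obtain t' where t': "t' \<in> sphere 0 r" and tt': "dist t' t < D t' / 2" and "\<delta>\<^sub>0 \<le> D t' / 2"
      using \<delta>\<^sub>0[of t] t by auto
    then have \<delta>t': "\<delta> \<le> D t' / 2" unfolding \<delta>_def by linarith
    have wzk: "cmod (w k - z k) < \<delta>" using wz k by blast
    then have "r < Im (w k)" unfolding \<delta>_def by (intro Im_gt_if_cmod_diff_lt[of _ "z k"]) simp
    moreover have "\<bar>Im t\<bar> \<le> r" using t abs_Im_le_cmod by metis
    ultimately have "0 < Im (w k + t)" by auto
    then have wt: "w(k := w k + t) \<in> upper_half_space n" using upper_half_space_upd[OF w k] by blast
    have "cmod (w k + t - (z k + t')) \<le> cmod (w k - z k) + cmod (t - t')"
      using norm_triangle_ineq[of "w k - z k" "t - t'"] by (simp add: algebra_simps)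
    also have "\<dots> < D t'"
      using wzk tt' \<delta>t' by (simp add: dist_norm norm_minus_commute)
    finally have "\<forall>i\<in>{1..n}. cmod ((w(k := w k + t)) i - zt t' i) < D t'"
      using wz \<delta>t' D[OF t'] by (auto simp: zt_def)
    then have 1: "cmod (F (w(k := w k + t)) - F (zt t')) < \<eta> / 2"
      using DF[OF t' wt] by blast
    have "\<forall>i\<in>{1..n}. cmod (zt t i - zt t' i) < D t'"
      using tt' D[OF t'] by (auto simp: zt_def dist_norm norm_minus_commute)
    then have 2: "cmod (F (zt t) - F (zt t')) < \<eta> / 2"
      using DF[OF t' zt] t by simp
    have "cmod (F (w(k := w k + t)) - F (zt t))
          \<le> cmod (F (w(k := w k + t)) - F (zt t')) + cmod (F (zt t) - F (zt t'))"
      using norm_triangle_ineq4[of "F (w(k := w k + t)) - F (zt t')" "F (zt t) - F (zt t')"]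
      by (simp add: algebra_simps)
    with 1 2 wt show ?thesis by linarith
  qed
  moreover have "\<delta> > 0" using \<open>0 < \<delta>\<^sub>0\<close> r by (simp add: \<delta>_def)
  ultimately show ?thesis using that unfolding zt_def by blast
qed

lemma continuous_on_Hn_partial_z:
  assumes F: "holomorphic_on_Hn n F" and k: "k \<in> {1..n}"
  shows "continuous_on_Hn n (partial_z k F)"
  unfolding continuous_on_Hn_def
proof (intro ballI allI impI)
  fix z and \<epsilon> :: real assume z: "z \<in> upper_half_space n" and \<epsilon>: "0 < \<epsilon>"
  define r where "r = Im (z k) / 2"
  have r: "0 < r" "r < Im (z k)" using Im_upper_half_space_pos[OF z k] by (auto simp: r_def)
  obtain \<delta> where "\<delta> > 0" and \<delta>: "\<And>w t. w \<in> upper_half_space n \<Longrightarrow>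
      \<forall>i\<in>{1..n}. cmod (w i - z i) < \<delta> \<Longrightarrow> cmod t = r \<Longrightarrow>
      cmod (F (w(k := w k + t)) - F (z(k := z k + t))) < \<epsilon> * r / 2"
    using continuous_on_Hn_uniformly_on_circle[OF _ z k r, of F "\<epsilon> * r / 2"] F \<epsilon> r
    unfolding holomorphic_on_Hn_iff by (metis half_gt_zero mult_pos_pos)
  have "cmod (partial_z k F w - partial_z k F z) < \<epsilon>"
    if w: "w \<in> upper_half_space n" and wz: "\<forall>i\<in>{1..n}. cmod (w i - z i) < min \<delta> r" for w
  proof -
    have "cmod (w k - z k) < Im (z k) - r" using wz k by (auto simp: r_def)
    then have wr: "r < Im (w k)" by (rule Im_gt_if_cmod_diff_lt)
    have "cmod (2 * of_real pi * \<i> * partial_z k F w - 2 * of_real pi * \<i> * partial_z k F z)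
           \<le> \<epsilon> * r / 2 / r^2 * (2 * pi * r)"
    proof (rule has_contour_integral_bound_circlepath[OF has_contour_integral_diff
          [OF partial_z_has_contour_integral[OF F w k r(1) wr]
              partial_z_has_contour_integral[OF F z k r]]])
      fix t :: complex assume t: "norm (t - 0) = r"
      have "cmod (F (w(k := w k + t)) / t^2 - F (z(k := z k + t)) / t^2)
            = cmod (F (w(k := w k + t)) - F (z(k := z k + t))) / r^2"
        using t by (simp add: diff_divide_distrib[symmetric] norm_divide norm_power)
      also have "\<dots> \<le> \<epsilon> * r / 2 / r^2"
        using \<delta>[OF w _ , of t] wz t by (intro divide_right_mono) (auto intro: less_imp_le)
      finally show "cmod (F (w(k := w k + t)) / t^2 - F (z(k := z k + t)) / t^2) \<le> \<epsilon> * r / 2 / r^2" .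
    qed (use \<epsilon> r in auto)
    also have "\<dots> = pi * \<epsilon>" using r by (simp add: power2_eq_square field_simps)
    finally have "2 * pi * cmod (partial_z k F w - partial_z k F z) \<le> pi * \<epsilon>"
      by (simp add: right_diff_distrib[symmetric] norm_mult)
    then show ?thesis using \<epsilon> pi_gt_zero by (simp add: field_simps)
  qed
  then show "\<exists>\<delta>>0. \<forall>w\<in>upper_half_space n. (\<forall>i\<in>{1..n}. cmod (w i - z i) < \<delta>) \<longrightarrow>
               cmod (partial_z k F w - partial_z k F z) < \<epsilon>"
    using \<open>\<delta> > 0\<close> r by (intro exI[of _ "min \<delta> r"]) auto
qed

lemma Cauchy_integral_circlepath_parametric:
  fixes G :: "complex \<Rightarrow> complex \<Rightarrow> complex"
  assumes h: "continuous_on S h"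
    and \<gamma>: "valid_path \<gamma>" "continuous_on {0..1} (\<lambda>t. vector_derivative \<gamma> (at t))"
    and G: "continuous_on (S \<times> path_image \<gamma>) (\<lambda>(s, t). G s t)"
    and hol: "\<And>t. t \<in> path_image \<gamma> \<Longrightarrow> (\<lambda>s. G s t) holomorphic_on S"
    and int: "\<And>s. s \<in> S \<Longrightarrow> (G s has_contour_integral h s) \<gamma>"
    and R: "0 < R" "cball u0 R \<subseteq> S" and u: "u \<in> ball u0 R"
  shows "((\<lambda>s. h s / (s - u)) has_contour_integral 2 * of_real pi * \<i> * h u) (circlepath u0 R)"
proof -
  define c :: complex where "c = 2 * of_real pi * \<i>"
  have circle: "path_image (circlepath u0 R) = sphere u0 R"
    using R by (simp add: path_image_circlepath_nonneg)
  have Cauchy_G: "contour_integral (circlepath u0 R) (\<lambda>s. G s t / (s - u)) = c * G u t"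
    if t: "t \<in> path_image \<gamma>" for t
  proof -
    have "(\<lambda>s. G s t) holomorphic_on cball u0 R"
      using hol[OF t] R(2) by (rule holomorphic_on_subset)
    then have "((\<lambda>s. G s t / (s - u)) has_contour_integral c * G u t) (circlepath u0 R)"
      unfolding c_def using u
      by (intro Cauchy_integral_circlepath holomorphic_on_imp_continuous_on)
         (auto elim: holomorphic_on_subset simp: dist_norm norm_minus_commute)
    then show ?thesis by (rule contour_integral_unique)
  qed
  have "contour_integral (circlepath u0 R) (\<lambda>s. h s / (s - u))
      = contour_integral (circlepath u0 R) (\<lambda>s. contour_integral \<gamma> (\<lambda>t. G s t / (s - u)))"
    using R circle int
    by (intro contour_integral_eq)
       (auto intro!: contour_integral_unique[symmetric] has_contour_integral_div)
  also have "\<dots> = contour_integral \<gamma> (\<lambda>t. contour_integral (circlepath u0 R) (\<lambda>s. G s t / (s - u)))"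
  proof (rule contour_integral_swap)
    have "continuous_on (sphere u0 R \<times> path_image \<gamma>) (\<lambda>(s, t). G s t)"
      using R(2) by (intro continuous_on_subset[OF G]) auto
    then show "continuous_on (path_image (circlepath u0 R) \<times> path_image \<gamma>) (\<lambda>(s, t). G s t / (s - u))"
      unfolding circle case_prod_unfold using u
      by (intro continuous_intros) auto
    show "continuous_on {0..1} (\<lambda>t. vector_derivative (circlepath u0 R) (at t))"
      unfolding vector_derivative_circlepath by (intro continuous_intros)
  qed (use \<gamma> in auto)
  also have "\<dots> = contour_integral \<gamma> (\<lambda>t. c * G u t)"
    by (intro contour_integral_eq) (simp add: Cauchy_G)
  also have "\<dots> = c * h u"
    using u R by (intro contour_integral_unique has_contour_integral_lmul int) auto
  finally have "contour_integral (circlepath u0 R) (\<lambda>s. h s / (s - u)) = c * h u" .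
  moreover have "continuous_on (sphere u0 R) (\<lambda>s. h s / (s - u))"
    using R u by (intro continuous_intros continuous_on_subset[OF h]) auto
  then have "(\<lambda>s. h s / (s - u)) contour_integrable_on circlepath u0 R"
    using circle contour_integrable_continuous_circlepath by metis
  ultimately show ?thesis using has_contour_integral_integral unfolding c_def by metis
qed

lemma holomorphic_on_parametric_contour_integral:
  fixes G :: "complex \<Rightarrow> complex \<Rightarrow> complex"
  assumes S: "open S" and h: "continuous_on S h"
    and \<gamma>: "valid_path \<gamma>" "continuous_on {0..1} (\<lambda>t. vector_derivative \<gamma> (at t))"
    and G: "continuous_on (S \<times> path_image \<gamma>) (\<lambda>(s, t). G s t)"
    and hol: "\<And>t. t \<in> path_image \<gamma> \<Longrightarrow> (\<lambda>s. G s t) holomorphic_on S"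
    and int: "\<And>s. s \<in> S \<Longrightarrow> (G s has_contour_integral h s) \<gamma>"
  shows "h holomorphic_on S"
proof -
  define c :: complex where "c = 2 * of_real pi * \<i>"
  have "h field_differentiable at u0" if u0: "u0 \<in> S" for u0
  proof -
    obtain R where R: "R > 0" "cball u0 R \<subseteq> S"
      using S u0 open_contains_cball by blast
    have "continuous_on (path_image (circlepath u0 R)) h"
      using R by (intro continuous_on_subset[OF h]) (auto simp: path_image_circlepath_nonneg)
    then obtain h' where "((\<lambda>u. c * h u) has_field_derivative h') (at u0)"
      using Cauchy_next_derivative_circlepath(2)[of u0 R h 1 "\<lambda>u. c * h u" u0] R
        Cauchy_integral_circlepath_parametric[OF h \<gamma> G hol int R]
      unfolding c_def by auto
    then have "((\<lambda>u. inverse c * (c * h u)) has_field_derivative inverse c * h') (at u0)"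
      by (rule DERIV_cmult)
    moreover have "c \<noteq> 0" by (simp add: c_def)
    then have "(\<lambda>u. inverse c * (c * h u)) = h"
      by (simp add: fun_eq_iff mult.assoc[symmetric])
    ultimately show ?thesis
      by (auto simp: field_differentiable_def)
  qed
  then show ?thesis
    using S holomorphic_on_open field_differentiable_def by blast
qed

lemma continuous_on_Hn_two_variable_slice:
  assumes F: "continuous_on_Hn n F" and z: "z \<in> upper_half_space n"
    and i: "i \<in> {1..n}" and k: "k \<in> {1..n}" "k \<noteq> i" and \<rho>: "\<rho> < Im (z k)"
  shows "continuous_on (upper_half_plane \<times> cball 0 \<rho>) (\<lambda>(s, t). F ((z(i := s))(k := z k + t)))"
  unfolding case_prod_unfold using F
proof (rule continuous_on_compose_Hn)
  fix p :: "complex \<times> complex" assume p: "p \<in> upper_half_plane \<times> cball 0 \<rho>"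
  then have "z(k := z k + snd p) \<in> upper_half_space n"
    using upper_half_space_upd[OF z k(1)] cball_subset_shifted_half_plane[OF \<rho>] by auto
  then have "(z(k := z k + snd p))(i := fst p) \<in> upper_half_space n"
    using upper_half_space_upd[OF _ i, of _ "fst p"] p by auto
  then show "(z(i := fst p))(k := z k + snd p) \<in> upper_half_space n"
    by (simp only: fun_upd_twist[OF k(2), symmetric])
next
  fix j
  show "continuous_on (upper_half_plane \<times> cball 0 \<rho>) (\<lambda>p. ((z(i := fst p))(k := z k + snd p)) j)"
    by (cases "j = k"; cases "j = i") (auto intro!: continuous_intros)
qed

lemma holomorphic_on_partial_z_in_other_variable:
  assumes F: "holomorphic_on_Hn n F" and z: "z \<in> upper_half_space n"
    and i: "i \<in> {1..n}" and k: "k \<in> {1..n}" "k \<noteq> i"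
  shows "(\<lambda>s. partial_z k F (z(i := s))) holomorphic_on upper_half_plane"
proof -
  define c :: complex where "c = 2 * of_real pi * \<i>"
  define \<rho> where "\<rho> = Im (z k) / 2"
  have \<rho>: "0 < \<rho>" "\<rho> < Im (z k)"
    using Im_upper_half_space_pos[OF z k(1)] by (auto simp: \<rho>_def)
  have circle: "path_image (circlepath 0 \<rho>) = sphere 0 \<rho>"
    using \<rho> by (simp add: path_image_circlepath_nonneg)
  have zi: "z(i := s) \<in> upper_half_space n" if "s \<in> upper_half_plane" for s
    using upper_half_space_upd[OF z i] that by simp
  have "(\<lambda>s. c * partial_z k F (z(i := s))) holomorphic_on upper_half_plane"
  proof (rule holomorphic_on_parametric_contour_integral
      [where \<gamma> = "circlepath 0 \<rho>" and G = "\<lambda>s t. F ((z(i := s))(k := z k + t)) / t^2"])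
    have coord: "continuous_on S (\<lambda>s. (z(i := s)) j)" for S j
      by (cases "j = i") auto
    show "continuous_on upper_half_plane (\<lambda>s. c * partial_z k F (z(i := s)))"
      using continuous_on_Hn_cmult[OF continuous_on_Hn_partial_z[OF F k(1)]] zi
      by (rule continuous_on_compose_Hn) (use coord in blast)+
    have "continuous_on (upper_half_plane \<times> sphere 0 \<rho>) (\<lambda>(s, t). F ((z(i := s))(k := z k + t)))"
      using F unfolding holomorphic_on_Hn_iff
      by (intro continuous_on_subset[OF continuous_on_Hn_two_variable_slice[OF _ z i k \<rho>(2)]]) auto
    then show "continuous_on (upper_half_plane \<times> path_image (circlepath 0 \<rho>))
                 (\<lambda>(s, t). F ((z(i := s))(k := z k + t)) / t^2)"
      unfolding circle case_prod_unfold using \<rho> by (intro continuous_intros) auto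
    show "(\<lambda>s. F ((z(i := s))(k := z k + t)) / t^2) holomorphic_on upper_half_plane"
      if "t \<in> path_image (circlepath 0 \<rho>)" for t
    proof -
      have "z(k := z k + t) \<in> upper_half_space n"
        using upper_half_space_upd[OF z k(1)] cball_subset_shifted_half_plane[OF \<rho>(2)] that circle \<rho>(1)
        by auto
      then have "(\<lambda>s. F ((z(k := z k + t))(i := s))) holomorphic_on upper_half_plane"
        using F i unfolding holomorphic_on_Hn_iff separately_holomorphic_on_Hn_def by blast
      then show ?thesis using k(2) by (auto simp: fun_upd_twist intro!: holomorphic_intros)
    qed
    show "((\<lambda>t. F ((z(i := s))(k := z k + t)) / t^2) has_contour_integral
            c * partial_z k F (z(i := s))) (circlepath 0 \<rho>)" if "s \<in> upper_half_plane" for s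
      using partial_z_has_contour_integral[OF F zi[OF that] k(1) \<rho>(1)] \<rho>(2) k(2)
      by (simp add: c_def)
  qed (auto simp: open_upper_half_plane vector_derivative_circlepath intro!: continuous_intros)
  then have "(\<lambda>s. inverse c * (c * partial_z k F (z(i := s)))) holomorphic_on upper_half_plane"
    by (rule holomorphic_on_mult[OF holomorphic_on_const])
  moreover have "c \<noteq> 0" by (simp add: c_def)
  ultimately show ?thesis by (simp add: mult.assoc[symmetric])
qed

lemma separately_holomorphic_on_Hn_partial_z:
  assumes F: "holomorphic_on_Hn n F" and k: "k \<in> {1..n}"
  shows "separately_holomorphic_on_Hn n (partial_z k F)"
  unfolding separately_holomorphic_on_Hn_def
proof (intro ballI)
  fix z i assume z: "z \<in> upper_half_space n" and i: "i \<in> {1..n}"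
  show "(\<lambda>s. partial_z k F (z(i := s))) holomorphic_on upper_half_plane"
  proof (cases "i = k")
    case True
    have "(\<lambda>w. F (z(k := w))) holomorphic_on upper_half_plane"
      using F z k by (auto simp: holomorphic_on_Hn_iff separately_holomorphic_on_Hn_def)
    then show ?thesis
      using holomorphic_deriv[OF _ open_upper_half_plane] True by (simp add: partial_z_def)
  next
    case False
    then show ?thesis using holomorphic_on_partial_z_in_other_variable[OF F z i k] by blast
  qed
qed

lemma holomorphic_on_Hn_partial_z:
  "holomorphic_on_Hn n F \<Longrightarrow> k \<in> {1..n} \<Longrightarrow> holomorphic_on_Hn n (partial_z k F)"
  using continuous_on_Hn_partial_z separately_holomorphic_on_Hn_partial_z holomorphic_on_Hn_iff
  by blast

lemma det_mat_eq_sum_permutations: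
  "Determinant.det (mat N N (\<lambda>(a, b). E a b)) =
     (\<Sum>p\<in>{p. p permutes {0..<N}}. signof p * (\<Prod>i=0..<N. E i (p i)))"
proof -
  have "p i < N" if "p permutes {0..<N}" "i < N" for p i
    using that permutes_in_image by fastforce
  then show ?thesis
    by (subst det_def'[of _ N]) (auto intro!: sum.cong prod.cong)
qed

lemma holomorphic_on_Hn_det:
  assumes "\<And>a b. a < N \<Longrightarrow> b < N \<Longrightarrow> holomorphic_on_Hn n (E a b)"
  shows "holomorphic_on_Hn n (\<lambda>z. Determinant.det (mat N N (\<lambda>(a, b). E a b z)))"
proof -
  have perm: "p i < N" if "p \<in> {p. p permutes {0..<N}}" "i \<in> {0..<N}" for p i
    using that permutes_in_image by fastforce
  have "continuous_on_Hn n (\<lambda>z. \<Sum>p\<in>{p. p permutes {0..<N}}. signof p * (\<Prod>i=0..<N. E i (p i) z))"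
    using assms perm unfolding continuous_on_Hn_iff_tendsto holomorphic_on_Hn_iff
    by (intro ballI tendsto_intros) (auto simp: continuous_on_Hn_iff_tendsto)
  moreover have "separately_holomorphic_on_Hn n
      (\<lambda>z. \<Sum>p\<in>{p. p permutes {0..<N}}. signof p * (\<Prod>i=0..<N. E i (p i) z))"
    using assms perm unfolding separately_holomorphic_on_Hn_def holomorphic_on_Hn_iff
    by (intro ballI holomorphic_intros) auto
  ultimately show ?thesis
    by (simp add: holomorphic_on_Hn_iff det_mat_eq_sum_permutations)
qed

section \<open>The action of SL(2) on the upper half space\<close>

lemma Im_moebius:
  fixes A B C D w :: complex
  assumes "Im A = 0" "Im B = 0" "Im C = 0" "Im D = 0" and "A * D - B * C = 1"
  shows "Im ((A * w + B) / (C * w + D)) = Im w / (cmod (C * w + D))^2"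
proof -
  have "Re A * Re D - Re B * Re C = 1"
    using arg_cong[OF assms(5), of Re] assms(1-4) by simp
  then show ?thesis
    unfolding Im_divide' using assms(1-4) by (simp add: algebra_simps)
qed

lemma moebius_denominator_nonzero:
  fixes A B C D w :: complex
  assumes "Im A = 0" "Im B = 0" "Im C = 0" "Im D = 0" and "A * D - B * C = 1" and "0 < Im w"
  shows "C * w + D \<noteq> 0"
proof
  assume zero: "C * w + D = 0"
  have "Im (C * w + D) = Re C * Im w" using assms(3,4) by simp
  then have "Re C * Im w = 0" using zero by simp
  then have "Re C = 0" using assms(6) by simp
  then have "Re D = 0" using arg_cong[OF zero, of Re] assms(3,4) by simp
  have "Re A * Re D - Re B * Re C = 1"
    using arg_cong[OF assms(5), of Re] assms(1-4) by simp
  with \<open>Re C = 0\<close> \<open>Re D = 0\<close> show False by simp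
qed

lemma has_field_derivative_moebius:
  fixes A B C D x :: complex
  assumes "A * D - B * C = 1" and "C * x + D \<noteq> 0"
  shows "((\<lambda>\<xi>. (A * \<xi> + B) / (C * \<xi> + D)) has_field_derivative 1 / (C * x + D)^2) (at x)"
proof -
  have "((\<lambda>\<xi>. (A * \<xi> + B) / (C * \<xi> + D)) has_field_derivative
          (A * (C * x + D) - (A * x + B) * C) / ((C * x + D) * (C * x + D))) (at x)"
    using assms(2) by (auto intro!: derivative_eq_intros)
  moreover have "A * (C * x + D) - (A * x + B) * C = 1"
    using assms(1) by (simp add: algebra_simps)
  ultimately show ?thesis by (simp add: power2_eq_square)
qed

definition SL2R_under_embeddings ::
  "nat \<Rightarrow> (nat \<Rightarrow> complex \<Rightarrow> complex) \<Rightarrow> complex \<Rightarrow> complex \<Rightarrow> complex \<Rightarrow> complex \<Rightarrow> bool" where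
  "SL2R_under_embeddings n \<sigma> a b c d \<longleftrightarrow> (\<forall>i\<in>{1..n}.
     Im (\<sigma> i a) = 0 \<and> Im (\<sigma> i b) = 0 \<and> Im (\<sigma> i c) = 0 \<and> Im (\<sigma> i d) = 0 \<and>
     \<sigma> i a * \<sigma> i d - \<sigma> i b * \<sigma> i c = 1)"

lemma SL2R_under_embeddings_if_in_SL2:
  assumes K: "is_subfield K" and real: "totally_real K" and \<sigma>: "enumerates_embeddings K n \<sigma>"
    and \<gamma>: "in_SL2 (ring_of_integers K) a b c d"
  shows "SL2R_under_embeddings n \<sigma> a b c d"
  unfolding SL2R_under_embeddings_def
proof
  fix i assume i: "i \<in> {1..n}"
  have emb: "is_embedding K (\<sigma> i)" using \<sigma> i unfolding enumerates_embeddings_def by blast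
  have in_K: "a \<in> K" "b \<in> K" "c \<in> K" "d \<in> K" and det: "a * d = b * c + 1"
    using \<gamma> unfolding in_SL2_def ring_of_integers_def by (auto simp: algebra_simps)
  have "b * c \<in> K" "1 \<in> K" using K in_K unfolding is_subfield_def by auto
  then have "\<sigma> i a * \<sigma> i d = \<sigma> i b * \<sigma> i c + 1"
    using emb in_K arg_cong[OF det, of "\<sigma> i"] unfolding is_embedding_def by metis
  moreover have "Im (\<sigma> i x) = 0" if "x \<in> K" for x
    using real emb that unfolding totally_real_def by (simp add: complex_is_Real_iff)
  ultimately show "Im (\<sigma> i a) = 0 \<and> Im (\<sigma> i b) = 0 \<and> Im (\<sigma> i c) = 0 \<and> Im (\<sigma> i d) = 0 \<and>
      \<sigma> i a * \<sigma> i d - \<sigma> i b * \<sigma> i c = 1"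
    using in_K by simp
qed

lemma automorphy_denominator_nonzero:
  assumes "SL2R_under_embeddings n \<sigma> a b c d" "z \<in> upper_half_space n" "i \<in> {1..n}"
  shows "\<sigma> i c * z i + \<sigma> i d \<noteq> 0"
  using assms moebius_denominator_nonzero Im_upper_half_space_pos
  unfolding SL2R_under_embeddings_def by blast

lemma moebius_action_in_upper_half_space:
  assumes \<gamma>: "SL2R_under_embeddings n \<sigma> a b c d" and z: "z \<in> upper_half_space n"
  shows "moebius_action n \<sigma> a b c d z \<in> upper_half_space n"
proof -
  have "0 < Im ((\<sigma> i a * z i + \<sigma> i b) / (\<sigma> i c * z i + \<sigma> i d))" if i: "i \<in> {1..n}" for i
    using Im_moebius[of "\<sigma> i a" "\<sigma> i b" "\<sigma> i c" "\<sigma> i d" "z i"] \<gamma> i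
      automorphy_denominator_nonzero[OF \<gamma> z i] Im_upper_half_space_pos[OF z i]
    unfolding SL2R_under_embeddings_def by simp
  then show ?thesis
    by (auto simp: upper_half_space_def moebius_action_def)
qed

lemma moebius_action_upd:
  assumes "k \<in> {1..n}"
  shows "moebius_action n \<sigma> a b c d (z(k := \<xi>)) =
           (moebius_action n \<sigma> a b c d z)(k := (\<sigma> k a * \<xi> + \<sigma> k b) / (\<sigma> k c * \<xi> + \<sigma> k d))"
  using assms by (auto simp: moebius_action_def)

definition automorphy_factor ::
  "nat \<Rightarrow> (nat \<Rightarrow> complex \<Rightarrow> complex) \<Rightarrow> complex \<Rightarrow> complex \<Rightarrow> (nat \<Rightarrow> int) \<Rightarrow> (nat \<Rightarrow> complex) \<Rightarrow> complex"
  where "automorphy_factor n \<sigma> c d f z = (\<Prod>i=1..n. (\<sigma> i c * z i + \<sigma> i d) powi f i)"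

lemma automorphy_factor_upd:
  assumes "k \<in> {1..n}"
  shows "automorphy_factor n \<sigma> c d f (z(k := \<xi>)) =
           (\<sigma> k c * \<xi> + \<sigma> k d) powi f k * (\<Prod>i\<in>{1..n} - {k}. (\<sigma> i c * z i + \<sigma> i d) powi f i)"
  unfolding automorphy_factor_def using assms
  by (subst prod.remove[of _ k]) (auto intro!: prod.cong)

lemma power_int_sum:
  fixes x :: "'a :: field"
  assumes "x \<noteq> 0"
  shows "x powi (\<Sum>j\<in>S. g j) = (\<Prod>j\<in>S. x powi g j)"
  by (induction S rule: infinite_finite_induct) (auto simp: power_int_add assms)

lemma automorphy_factor_add:
  assumes "\<And>i. i \<in> {1..n} \<Longrightarrow> \<sigma> i c * z i + \<sigma> i d \<noteq> 0"
  shows "automorphy_factor n \<sigma> c d (\<lambda>i. f i + g i) z =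
           automorphy_factor n \<sigma> c d f z * automorphy_factor n \<sigma> c d g z"
  unfolding automorphy_factor_def using assms by (simp add: power_int_add prod.distrib)

lemma automorphy_factor_sum:
  assumes "\<And>i. i \<in> {1..n} \<Longrightarrow> \<sigma> i c * z i + \<sigma> i d \<noteq> 0"
  shows "automorphy_factor n \<sigma> c d (\<lambda>i. \<Sum>j\<in>S. f j i) z = (\<Prod>j\<in>S. automorphy_factor n \<sigma> c d (f j) z)"
  unfolding automorphy_factor_def using assms
  by (simp add: power_int_sum prod.swap[of _ S])

lemma partial_z_moebius_action:
  assumes F: "holomorphic_on_Hn n F"
    and transf: "\<forall>z\<in>upper_half_space n.
                   F (moebius_action n \<sigma> a b c d z) = automorphy_factor n \<sigma> c d f z * F z"
    and \<gamma>: "SL2R_under_embeddings n \<sigma> a b c d" and k: "k \<in> {1..n}" and z: "z \<in> upper_half_space n"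
  shows "partial_z k F (moebius_action n \<sigma> a b c d z) = automorphy_factor n \<sigma> c d f z *
     (of_int (f k) * \<sigma> k c * (\<sigma> k c * z k + \<sigma> k d) * F z + (\<sigma> k c * z k + \<sigma> k d)^2 * partial_z k F z)"
proof -
  define e where "e = \<sigma> k c * z k + \<sigma> k d"
  define \<mu> where "\<mu> \<xi> = (\<sigma> k a * \<xi> + \<sigma> k b) / (\<sigma> k c * \<xi> + \<sigma> k d)" for \<xi>
  define P where "P = (\<Prod>i\<in>{1..n} - {k}. (\<sigma> i c * z i + \<sigma> i d) powi f i)"
  define \<gamma>z where "\<gamma>z = moebius_action n \<sigma> a b c d z"
  have e: "e \<noteq> 0" unfolding e_def by (rule automorphy_denominator_nonzero[OF \<gamma> z k])
  have det: "\<sigma> k a * \<sigma> k d - \<sigma> k b * \<sigma> k c = 1"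
    using \<gamma> k unfolding SL2R_under_embeddings_def by blast
  have slice: "F (\<gamma>z(k := \<mu> \<xi>)) = ((\<sigma> k c * \<xi> + \<sigma> k d) powi f k * P) * F (z(k := \<xi>))"
    if "\<xi> \<in> upper_half_plane" for \<xi>
    using transf[THEN bspec, OF upper_half_space_upd[OF z k, of \<xi>]] that
    by (simp add: \<gamma>z_def \<mu>_def P_def moebius_action_upd[OF k] automorphy_factor_upd[OF k])
  have "\<mu> (z k) = \<gamma>z k" using k by (simp add: \<mu>_def \<gamma>z_def moebius_action_def)
  then have "((\<lambda>w. F (\<gamma>z(k := w))) has_field_derivative partial_z k F \<gamma>z) (at (\<mu> (z k)))"
    using has_field_derivative_partial_z[OF F _ k] moebius_action_in_upper_half_space[OF \<gamma> z]
    by (simp add: \<gamma>z_def)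
  moreover have "(\<mu> has_field_derivative 1 / e^2) (at (z k))"
    using has_field_derivative_moebius[OF det] e unfolding \<mu>_def e_def by blast
  ultimately have "((\<lambda>\<xi>. F (\<gamma>z(k := \<mu> \<xi>))) has_field_derivative partial_z k F \<gamma>z * (1 / e^2)) (at (z k))"
    by (rule DERIV_chain2)
  then have lhs: "((\<lambda>\<xi>. ((\<sigma> k c * \<xi> + \<sigma> k d) powi f k * P) * F (z(k := \<xi>)))
                   has_field_derivative partial_z k F \<gamma>z * (1 / e^2)) (at (z k))"
    by (rule has_field_derivative_transform_within_open[OF _ open_upper_half_plane])
       (use Im_upper_half_space_pos[OF z k] slice in auto)
  have rhs: "((\<lambda>\<xi>. ((\<sigma> k c * \<xi> + \<sigma> k d) powi f k * P) * F (z(k := \<xi>))) has_field_derivative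
      (of_int (f k) * e powi (f k - 1) * \<sigma> k c * P) * F z + partial_z k F z * (e powi f k * P)) (at (z k))"
    using e has_field_derivative_partial_z[OF F z k]
    unfolding e_def by (auto intro!: derivative_eq_intros)
  have "partial_z k F \<gamma>z =
      e^2 * ((of_int (f k) * e powi (f k - 1) * \<sigma> k c * P) * F z + partial_z k F z * (e powi f k * P))"
    using DERIV_unique[OF lhs rhs] e by (simp add: field_simps)
  also have "\<dots> = (e powi f k * P) * (of_int (f k) * \<sigma> k c * e * F z + e^2 * partial_z k F z)"
    using e by (simp add: power_int_diff field_simps power2_eq_square)
  also have "e powi f k * P = automorphy_factor n \<sigma> c d f z"
    using automorphy_factor_upd[OF k, of \<sigma> c d f z "z k"] by (simp add: e_def P_def)
  finally show ?thesis by (simp add: \<gamma>z_def e_def)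
qed

section \<open>Determinants\<close>

lemma det_lower_triangular_mat:
  assumes "\<And>i j. i < j \<Longrightarrow> j < N \<Longrightarrow> E i j = 0"
  shows "Determinant.det (mat N N (\<lambda>(i, j). E i j)) = (\<Prod>i<N. E i i)"
proof -
  have "Determinant.det (mat N N (\<lambda>(i, j). E i j)) = prod_list (diag_mat (mat N N (\<lambda>(i, j). E i j)))"
    using assms by (intro det_lower_triangular[of N]) auto
  then show ?thesis by (simp add: prod_list_diag_prod atLeast0LessThan)
qed

lemma det_row_ops_column_scaling:
  fixes X Y :: "nat \<Rightarrow> nat \<Rightarrow> 'a :: comm_ring_1" and J \<alpha> \<beta> :: "nat \<Rightarrow> 'a"
  assumes Y0: "\<And>j. j < N \<Longrightarrow> Y 0 j = J j * X 0 j"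
    and Yp: "\<And>p j. 0 < p \<Longrightarrow> p < N \<Longrightarrow> j < N \<Longrightarrow> Y p j = J j * (\<alpha> p * X 0 j + \<beta> p * X p j)"
  shows "Determinant.det (mat N N (\<lambda>(p, j). Y p j)) =
           (\<Prod>p\<in>{1..<N}. \<beta> p) * (\<Prod>j<N. J j) * Determinant.det (mat N N (\<lambda>(p, j). X p j))"
proof -
  define L :: "'a mat" where "L = mat N N (\<lambda>(p, q).
    (if q = 0 then (if p = 0 then 1 else \<alpha> p) else 0) + (if 0 < p \<and> q = p then \<beta> p else 0))"
  define D :: "'a mat" where "D = mat N N (\<lambda>(p, q). if p = q then J q else 0)"
  define X' where "X' = mat N N (\<lambda>(p, j). X p j)"
  have carrier: "L \<in> carrier_mat N N" "D \<in> carrier_mat N N" "X' \<in> carrier_mat N N"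
    by (auto simp: L_def D_def X'_def)
  have LX: "(L * X') $$ (p, j) = (if p = 0 then X 0 j else \<alpha> p * X 0 j + \<beta> p * X p j)"
    if "p < N" "j < N" for p j
    using that
    by (auto simp: L_def X'_def scalar_prod_def sum.distrib distrib_right
        if_distrib[of "\<lambda>x. x * _"] atLeast0LessThan cong: if_cong)
  have "mat N N (\<lambda>(p, j). Y p j) = L * X' * D"
  proof (rule eq_matI)
    fix p j assume "p < dim_row (L * X' * D)" "j < dim_col (L * X' * D)"
    then have p: "p < N" and j: "j < N" using carrier by auto
    have "(L * X' * D) $$ (p, j) = (L * X') $$ (p, j) * J j"
      using p j carrier
      by (simp add: D_def scalar_prod_def if_distrib[of "\<lambda>x. _ * x"] atLeast0LessThan cong: if_cong)
    then show "mat N N (\<lambda>(p, j). Y p j) $$ (p, j) = (L * X' * D) $$ (p, j)"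
      using p j LX[OF p j] Y0 Yp by (simp add: mult.commute)
  qed (use carrier in auto)
  moreover have "Determinant.det L = (\<Prod>p\<in>{1..<N}. \<beta> p)"
  proof -
    have "Determinant.det L = (\<Prod>p<N. if p = 0 then 1 else \<beta> p)"
      unfolding L_def by (subst det_lower_triangular_mat) (auto intro!: prod.cong)
    also have "\<dots> = (\<Prod>p\<in>{1..<N}. \<beta> p)"
      by (cases N)
         (auto simp: lessThan_Suc_eq_insert_0 atLeast1_lessThan_eq_remove0 prod.reindex intro!: prod.cong)
    finally show ?thesis .
  qed
  moreover have "Determinant.det D = (\<Prod>j<N. J j)"
    unfolding D_def by (subst det_lower_triangular_mat) auto
  ultimately show ?thesis
    using det_mult[OF mult_carrier_mat[OF carrier(1,3)] carrier(2)] det_mult[OF carrier(1,3)]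
    by (simp add: X'_def mult_ac)
qed

section \<open>The bracket\<close>

lemma hilbert_modular_form_iff:
  "hilbert_modular_form K n \<sigma> f F \<longleftrightarrow> holomorphic_on_Hn n F \<and>
     (\<forall>a b c d. in_SL2 (ring_of_integers K) a b c d \<longrightarrow> (\<forall>z\<in>upper_half_space n.
        F (moebius_action n \<sigma> a b c d z) = automorphy_factor n \<sigma> c d f z * F z))"
  unfolding hilbert_modular_form_def automorphy_factor_def ..

definition bracket_entry ::
  "(nat \<Rightarrow> int) \<Rightarrow> (nat \<Rightarrow> (nat \<Rightarrow> complex) \<Rightarrow> complex) \<Rightarrow> nat \<Rightarrow> nat \<Rightarrow> (nat \<Rightarrow> complex) \<Rightarrow> complex"
  where "bracket_entry r F k j z =
           (if k = 0 then of_int (r (j + 1)) * F (j + 1) z else partial_z k (F (j + 1)) z)"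

lemma bracket_eq_det_entries:
  "bracket m r F z = Determinant.det (mat (m + 1) (m + 1) (\<lambda>(k, j). bracket_entry r F k j z))"
  unfolding bracket_def bracket_entry_def by (simp add: case_prod_unfold)

definition bracket_weight :: "nat \<Rightarrow> (nat \<Rightarrow> nat \<Rightarrow> int) \<Rightarrow> nat \<Rightarrow> int" where
  "bracket_weight m f i = (\<Sum>j=1..m+1. f j i) + (if i \<in> {1..m} then 2 else 0)"

lemma holomorphic_on_Hn_bracket:
  assumes "m \<le> n" and F: "\<And>j. j \<in> {1..m+1} \<Longrightarrow> holomorphic_on_Hn n (F j)"
  shows "holomorphic_on_Hn n (bracket m r F)"
proof -
  have "holomorphic_on_Hn n (bracket_entry r F k j)" if "k < m + 1" "j < m + 1" for k j
  proof (cases "k = 0")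
    case True
    then have "bracket_entry r F k j = (\<lambda>z. of_int (r (j + 1)) * F (j + 1) z)"
      by (simp add: fun_eq_iff bracket_entry_def)
    then show ?thesis using F that holomorphic_on_Hn_cmult by simp
  next
    case False
    then have "bracket_entry r F k j = partial_z k (F (j + 1))"
      by (simp add: fun_eq_iff bracket_entry_def)
    then show ?thesis using F that False assms(1) holomorphic_on_Hn_partial_z by simp
  qed
  then show ?thesis
    using holomorphic_on_Hn_det[of "m + 1" n "bracket_entry r F"]
    by (simp add: bracket_eq_det_entries[abs_def])
qed

lemma bracket_moebius_action:
  assumes "m \<le> n" and \<gamma>: "SL2R_under_embeddings n \<sigma> a b c d" and z: "z \<in> upper_half_space n"
    and F: "\<And>j. j \<in> {1..m+1} \<Longrightarrow> holomorphic_on_Hn n (F j)"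
    and transf: "\<And>j. j \<in> {1..m+1} \<Longrightarrow> \<forall>z\<in>upper_half_space n.
        F j (moebius_action n \<sigma> a b c d z) = automorphy_factor n \<sigma> c d (f j) z * F j z"
    and parallel: "\<And>j i. j \<in> {1..m+1} \<Longrightarrow> i \<in> {1..m} \<Longrightarrow> f j i = r j"
  shows "bracket m r F (moebius_action n \<sigma> a b c d z) =
           automorphy_factor n \<sigma> c d (bracket_weight m f) z * bracket m r F z"
proof -
  define e where "e i = \<sigma> i c * z i + \<sigma> i d" for i
  define J where "J j = automorphy_factor n \<sigma> c d (f (j + 1)) z" for j
  have e: "e i \<noteq> 0" if "i \<in> {1..n}" for i
    unfolding e_def using automorphy_denominator_nonzero[OF \<gamma> z that] .
  \<comment> \<open>in the transformed derivative rows, the terms r_j c_k e_k F_j are multiples of the first row\<close>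
  have "bracket m r F (moebius_action n \<sigma> a b c d z) =
          (\<Prod>k\<in>{1..<m+1}. e k ^ 2) * (\<Prod>j<m+1. J j) * bracket m r F z"
    unfolding bracket_eq_det_entries
  proof (rule det_row_ops_column_scaling[where \<alpha> = "\<lambda>k. \<sigma> k c * e k" and \<beta> = "\<lambda>k. e k ^ 2"])
    fix j assume "j < m + 1"
    then show "bracket_entry r F 0 j (moebius_action n \<sigma> a b c d z) = J j * bracket_entry r F 0 j z"
      using transf[of "j + 1"] z by (simp add: bracket_entry_def J_def)
  next
    fix k j assume k: "0 < k" "k < m + 1" and j: "j < m + 1"
    then have "k \<in> {1..n}" "f (j + 1) k = r (j + 1)" using assms(1) parallel[of "j + 1" k] by auto
    then show "bracket_entry r F k j (moebius_action n \<sigma> a b c d z) =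
          J j * (\<sigma> k c * e k * bracket_entry r F 0 j z + (e k)^2 * bracket_entry r F k j z)"
      using partial_z_moebius_action[OF F transf \<gamma> _ z, of "j + 1" k] j k
      by (simp add: bracket_entry_def J_def e_def algebra_simps)
  qed
  also have "(\<Prod>k\<in>{1..<m+1}. e k ^ 2) = automorphy_factor n \<sigma> c d (\<lambda>i. if i \<in> {1..m} then 2 else 0) z"
  proof -
    have "automorphy_factor n \<sigma> c d (\<lambda>i. if i \<in> {1..m} then 2 else 0) z =
        (\<Prod>i=1..n. if i \<in> {1..m} then e i ^ 2 else 1)"
      unfolding automorphy_factor_def e_def by (intro prod.cong) auto
    also have "\<dots> = (\<Prod>i\<in>{1..n} \<inter> {1..m}. e i ^ 2)"
      by (rule prod.inter_restrict[symmetric]) simp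
    also have "{1..n} \<inter> {1..m} = {1..<m+1}"
      using assms(1) by auto
    finally show ?thesis by simp
  qed
  also have "(\<Prod>j<m+1. J j) = automorphy_factor n \<sigma> c d (\<lambda>i. \<Sum>j=1..m+1. f j i) z"
  proof -
    have "(\<Prod>j<m+1. J j) = (\<Prod>j=1..m+1. automorphy_factor n \<sigma> c d (f j) z)"
      unfolding J_def by (rule prod.reindex_bij_witness[where i = "\<lambda>j. j - 1" and j = Suc]) auto
    then show ?thesis
      using automorphy_factor_sum e unfolding e_def by metis
  qed
  finally show ?thesis
    using automorphy_factor_add[of n \<sigma> c z d] e unfolding e_def bracket_weight_def
    by (simp add: mult_ac)
qed

theorem mainTheorem15:
  fixes K :: "complex set" and n m :: nat and \<sigma> :: "nat \<Rightarrow> complex \<Rightarrow> complex"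
    and F :: "nat \<Rightarrow> (nat \<Rightarrow> complex) \<Rightarrow> complex" and r :: "nat \<Rightarrow> int"
  assumes "number_field_of_degree K n"
    and "totally_real K"
    and "principal_ring (ring_of_integers K)"
    and "enumerates_embeddings K n \<sigma>"
    and "1 \<le> m" and "m \<le> n"
    and "\<forall>j\<in>{1..m+1}. \<exists>f. hilbert_modular_form K n \<sigma> f (F j) \<and> parallel_weight_on {1..m} f (r j)"
  shows "\<exists>f. hilbert_modular_form K n \<sigma> f (bracket m r F)
             \<and> parallel_weight_on {1..m} f ((\<Sum>j=1..m+1. r j) + 2)"
proof -
  obtain f where f: "\<And>j. j \<in> {1..m+1} \<Longrightarrow>
      hilbert_modular_form K n \<sigma> (f j) (F j) \<and> parallel_weight_on {1..m} (f j) (r j)"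
    using bchoice[OF assms(7)] by blast
  have K: "is_subfield K" using assms(1) unfolding number_field_of_degree_def by blast
  have "holomorphic_on_Hn n (bracket m r F)"
    using holomorphic_on_Hn_bracket[OF assms(6)] f unfolding hilbert_modular_form_iff by blast
  moreover have "bracket m r F (moebius_action n \<sigma> a b c d z) =
      automorphy_factor n \<sigma> c d (bracket_weight m f) z * bracket m r F z"
    if \<gamma>: "in_SL2 (ring_of_integers K) a b c d" and z: "z \<in> upper_half_space n" for a b c d z
    using bracket_moebius_action[OF assms(6) SL2R_under_embeddings_if_in_SL2[OF K assms(2,4) \<gamma>] z] f \<gamma>
    unfolding hilbert_modular_form_iff parallel_weight_on_def by blast
  moreover have "parallel_weight_on {1..m} (bracket_weight m f) ((\<Sum>j=1..m+1. r j) + 2)"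
    using f by (auto simp: parallel_weight_on_def bracket_weight_def intro!: sum.cong)
  ultimately show ?thesis unfolding hilbert_modular_form_iff by blast
qed

end
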